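(* Let $C\subseteq GF(2)^n$ be an affine subspace such that every vector of $C$ has weight exactly $k$. Then $|C|\le 2^{(n-|n-2k|)/2}$.
   Context: The weight of $x\in GF(2)^n$ is the number of its nonzero coordinates. *)

theory Defs
  imports Complex_Main "HOL-Library.Z2"
begin

text \<open>Vectors of GF(2)^n are represented as functions nat => bit (bit = GF(2))
  vanishing outside the coordinates 0..n-1.\<close>

definition gf2vec :: "nat \<Rightarrow> (nat \<Rightarrow> bit) set" where
  "gf2vec n = {x. \<forall>i\<ge>n. x i = 0}"

definition weight :: "nat \<Rightarrow> (nat \<Rightarrow> bit) \<Rightarrow> nat" where
  "weight n x = card {i. i < n \<and> x i \<noteq> 0}"

definition gf2_subspace :: "nat \<Rightarrow> (nat \<Rightarrow> bit) set \<Rightarrow> bool" where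
  "gf2_subspace n V \<longleftrightarrow> V \<subseteq> gf2vec n \<and> (\<lambda>_. 0) \<in> V \<and>
     (\<forall>x\<in>V. \<forall>y\<in>V. (\<lambda>i. x i + y i) \<in> V) \<and> (\<forall>c::bit. \<forall>x\<in>V. (\<lambda>i. c * x i) \<in> V)"

definition gf2_affine :: "nat \<Rightarrow> (nat \<Rightarrow> bit) set \<Rightarrow> bool" where
  "gf2_affine n C \<longleftrightarrow> (\<exists>a V. a \<in> gf2vec n \<and> gf2_subspace n V \<and> C = (\<lambda>v. (\<lambda>i. a i + v i)) ` V)"

end

theory Submission
  imports Defs "HOL-Library.FuncSet"
begin

text \<open>Write C = a + V with V linear and let S be the support of a. If a nonzero u \<in> V
  vanished on S, then a + u would have support S \<union> supp u, of weight larger than k; if it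
  vanished off S, then a + u would have support S - supp u, of weight smaller than k. Hence
  restriction to S and restriction to its complement are both injective on V, so |C| = |V|
  is at most 2^k and at most 2^(n-k).\<close>

lemma bit_add_eq_0_iff: "(a::bit) + b = 0 \<longleftrightarrow> a = b"
  by (cases a; cases b) simp_all

text \<open>By default the simplifier turns + on bit into XOR; keep it as ring addition.\<close>
declare add_bit_eq_xor [simp del]

lemma UNIV_bit: "(UNIV :: bit set) = {0, 1}"
  using bit.exhaust by blast

lemma inj_on_restrict_if_no_vanishing:
  fixes V :: "('a \<Rightarrow> bit) set"
  assumes add_closed: "\<forall>x\<in>V. \<forall>y\<in>V. (\<lambda>i. x i + y i) \<in> V"
    and no_vanishing: "\<And>u. u \<in> V \<Longrightarrow> \<forall>i\<in>T. u i = 0 \<Longrightarrow> u = (\<lambda>_. 0)"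
  shows "inj_on (\<lambda>v. restrict v T) V"
proof (rule inj_onI)
  fix v w
  assume "v \<in> V" "w \<in> V" and eq: "restrict v T = restrict w T"
  then have "(\<lambda>i. v i + w i) \<in> V"
    using add_closed by blast
  moreover have "\<forall>i\<in>T. v i + w i = 0"
    using eq by (simp add: bit_add_eq_0_iff fun_eq_iff) (metis restrict_apply')
  ultimately have "(\<lambda>i. v i + w i) = (\<lambda>_. 0)"
    by (rule no_vanishing)
  then show "v = w"
    by (simp add: fun_eq_iff bit_add_eq_0_iff)
qed

lemma card_le_pow_card_if_no_vanishing:
  fixes V :: "('a \<Rightarrow> bit) set"
  assumes "finite T"
    and "\<forall>x\<in>V. \<forall>y\<in>V. (\<lambda>i. x i + y i) \<in> V"
    and "\<And>u. u \<in> V \<Longrightarrow> \<forall>i\<in>T. u i = 0 \<Longrightarrow> u = (\<lambda>_. 0)"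
  shows "card V \<le> 2 ^ card T"
proof -
  have "card V \<le> card (T \<rightarrow>\<^sub>E (UNIV :: bit set))"
    using inj_on_restrict_if_no_vanishing[OF assms(2,3)]
    by (rule card_inj_on_le) (auto intro: finite_PiE assms(1) simp: UNIV_bit)
  also have "\<dots> = 2 ^ card T"
    by (simp add: card_PiE assms(1) UNIV_bit numeral_2_eq_2)
  finally show ?thesis .
qed

lemma weight_le: "weight n x \<le> n"
  unfolding weight_def by (rule card_mono[of "{..<n}", simplified]) auto

lemma card_zeros_eq: "card {i. i < n \<and> x i = 0} = n - weight n x"
proof -
  have "{i. i < n \<and> x i = 0} = {..<n} - {i. i < n \<and> x i \<noteq> 0}"
    by auto
  also have "card \<dots> = n - card {i. i < n \<and> x i \<noteq> 0}"
    by (subst card_Diff_subset) auto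
  finally show ?thesis
    unfolding weight_def .
qed

lemma weight_add_disjoint_gt:
  assumes "u \<in> gf2vec n" and "u \<noteq> (\<lambda>_. 0)" and "\<forall>i<n. a i \<noteq> 0 \<longrightarrow> u i = 0"
  shows "weight n a < weight n (\<lambda>i. a i + u i)"
proof -
  obtain j where "u j \<noteq> 0"
    using assms(2) by blast
  then have "j < n"
    using assms(1) leI unfolding gf2vec_def by blast
  then have "j \<in> {i. i < n \<and> a i + u i \<noteq> 0} - {i. i < n \<and> a i \<noteq> 0}"
    using assms(3) \<open>u j \<noteq> 0\<close> by auto
  moreover have "{i. i < n \<and> a i \<noteq> 0} \<subseteq> {i. i < n \<and> a i + u i \<noteq> 0}"
    using assms(3) by auto
  ultimately have "{i. i < n \<and> a i \<noteq> 0} \<subset> {i. i < n \<and> a i + u i \<noteq> 0}"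
    by blast
  then show ?thesis
    unfolding weight_def by (rule psubset_card_mono[rotated]) simp
qed

lemma weight_add_contained_lt:
  assumes "u \<in> gf2vec n" and "u \<noteq> (\<lambda>_. 0)" and "\<forall>i<n. a i = 0 \<longrightarrow> u i = 0"
  shows "weight n (\<lambda>i. a i + u i) < weight n a"
proof -
  have "\<forall>i<n. a i + u i \<noteq> 0 \<longrightarrow> u i = 0"
    using assms(3) by auto
  then have "weight n (\<lambda>i. a i + u i) < weight n (\<lambda>i. (a i + u i) + u i)"
    by (rule weight_add_disjoint_gt[OF assms(1,2)])
  also have "(\<lambda>i. (a i + u i) + u i) = a"
    by (simp add: fun_eq_iff add.assoc)
  finally show ?thesis .
qed

lemma weight_eq_if_const_weight:
  assumes "gf2_subspace n V" and "\<forall>v\<in>V. weight n (\<lambda>i. a i + v i) = k"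
  shows "weight n a = k"
proof -
  have "(\<lambda>_. 0) \<in> V"
    using assms(1) unfolding gf2_subspace_def by blast
  from assms(2)[rule_format, OF this] show ?thesis
    by (simp)
qed

lemma card_le_pow_card_if_weight_changes:
  assumes V: "gf2_subspace n V" and weight_V: "\<forall>v\<in>V. weight n (\<lambda>i. a i + v i) = k"
    and "finite T"
    and changes: "\<And>u. u \<in> gf2vec n \<Longrightarrow> u \<noteq> (\<lambda>_. 0) \<Longrightarrow> \<forall>i\<in>T. u i = 0 \<Longrightarrow>
      weight n (\<lambda>i. a i + u i) \<noteq> weight n a"
  shows "card V \<le> 2 ^ card T"
proof (rule card_le_pow_card_if_no_vanishing[OF \<open>finite T\<close>])
  show "\<forall>x\<in>V. \<forall>y\<in>V. (\<lambda>i. x i + y i) \<in> V"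
    using V unfolding gf2_subspace_def by blast
next
  fix u
  assume "u \<in> V" and "\<forall>i\<in>T. u i = 0"
  moreover have "u \<in> gf2vec n"
    using \<open>u \<in> V\<close> V unfolding gf2_subspace_def by blast
  moreover have "weight n (\<lambda>i. a i + u i) = weight n a"
    using \<open>u \<in> V\<close> weight_V weight_eq_if_const_weight[OF V weight_V] by simp
  ultimately show "u = (\<lambda>_. 0)"
    using changes by blast
qed

lemma card_le_pow_weight_if_const_weight:
  assumes "gf2_subspace n V" and "\<forall>v\<in>V. weight n (\<lambda>i. a i + v i) = k"
  shows "card V \<le> 2 ^ k"
proof -
  let ?S = "{i. i < n \<and> a i \<noteq> 0}"
  have "card V \<le> 2 ^ card ?S"
  proof (rule card_le_pow_card_if_weight_changes[OF assms])
    fix u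
    assume "u \<in> gf2vec n" and "u \<noteq> (\<lambda>_. 0)" and "\<forall>i\<in>?S. u i = 0"
    then show "weight n (\<lambda>i. a i + u i) \<noteq> weight n a"
      using weight_add_disjoint_gt[of u n a] by auto
  qed simp
  then show ?thesis
    using weight_eq_if_const_weight[OF assms] unfolding weight_def by simp
qed

lemma card_le_pow_coweight_if_const_weight:
  assumes "gf2_subspace n V" and "\<forall>v\<in>V. weight n (\<lambda>i. a i + v i) = k"
  shows "card V \<le> 2 ^ (n - k)"
proof -
  let ?T = "{i. i < n \<and> a i = 0}"
  have "card V \<le> 2 ^ card ?T"
  proof (rule card_le_pow_card_if_weight_changes[OF assms])
    fix u
    assume "u \<in> gf2vec n" and "u \<noteq> (\<lambda>_. 0)" and "\<forall>i\<in>?T. u i = 0"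
    then show "weight n (\<lambda>i. a i + u i) \<noteq> weight n a"
      using weight_add_contained_lt[of u n a] by auto
  qed simp
  then show ?thesis
    using weight_eq_if_const_weight[OF assms] by (simp add: card_zeros_eq)
qed

lemma card_translate_bit: "card ((\<lambda>v. (\<lambda>i. a i + v i)) ` V) = card (V :: ('a \<Rightarrow> bit) set)"
  by (rule card_image) (simp add: inj_on_def fun_eq_iff)

theorem corollary5:
  fixes n k :: nat and C :: "(nat \<Rightarrow> bit) set"
  assumes "gf2_affine n C"
    and "\<forall>x\<in>C. weight n x = k"
  shows "real (card C) \<le> 2 powr ((real n - \<bar>real n - 2 * real k\<bar>) / 2)"
proof -
  obtain a V where V: "gf2_subspace n V" and C: "C = (\<lambda>v. (\<lambda>i. a i + v i)) ` V"
    using assms(1) unfolding gf2_affine_def by blast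
  have weight_V: "\<forall>v\<in>V. weight n (\<lambda>i. a i + v i) = k"
    using assms(2) C by blast
  have "k \<le> n"
    using weight_le[of n a] weight_eq_if_const_weight[OF V weight_V] by simp
  have "card C = card V"
    unfolding C by (rule card_translate_bit)
  also have "\<dots> \<le> 2 ^ min k (n - k)"
    using card_le_pow_weight_if_const_weight[OF V weight_V]
      card_le_pow_coweight_if_const_weight[OF V weight_V]
    by (simp add: min_def)
  finally have "card C \<le> 2 ^ min k (n - k)" .
  then have "real (card C) \<le> 2 ^ min k (n - k)"
    by (metis of_nat_le_iff of_nat_numeral of_nat_power)
  also have "\<dots> = 2 powr real (min k (n - k))"
    by (simp add: powr_realpow)
  also have "real (min k (n - k)) = (real n - \<bar>real n - 2 * real k\<bar>) / 2"
    using \<open>k \<le> n\<close> by (cases "2 * k \<le> n") (simp_all add: of_nat_diff min_def)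
  finally show ?thesis .
qed

end
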